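(* Let $A_1,\dots,A_k$ be $2\times2$ real matrices with all entries strictly positive and norm $<1$, $d_i\in\mathbb R^2$, $T_i(x)=A_ix+d_i$, and assume $T_i(D)\subset D$ for all $i$, where $D$ is the closed unit disc. Then for every $\theta\in\mathbb{PR}^1$, every $n\ge0$ and every $a_1,\dots,a_{n+1}\in\{1,\dots,k\}$, \[ |a_1\cdots a_{n+1}|_\theta-|a_1\cdots a_n|_\theta=|a_{n+1}|_{\phi_{a_n\cdots a_1}(\theta)}. \]
   Context: $\mathbb{PR}^1$ is the space of lines through the origin in $\mathbb R^2$ (directions). For $\theta\in\mathbb{PR}^1$, $\pi_\theta$ is orthogonal projection onto the line through the origin perpendicular to $\theta$ (so fibres are lines in direction $\theta$); $\pi_\theta(D)$ is a segment of length 2. For a word $w=a_1\cdots a_n$, $T_w=T_{a_1}\circ\cdots\circ T_{a_n}$ and $D_w=T_w(D)$ (with $D_\emptyset=D$). The length function is $|w|_\theta=-\log_2\big(|\pi_\theta(D_w)|/2\big)$, where $|\cdot|$ denotes length of an interval. For each $i$, $\phi_i:\mathbb{PR}^1\to\mathbb{PR}^1$ sends a line $\ell$ to $A_i^{-1}(\ell)$, and $\phi_{a_n\cdots a_1}=\phi_{a_n}\circ\cdots\circ\phi_{a_1}$ (the identity for $n=0$). *)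

theory Defs
  imports "HOL-Analysis.Analysis"
begin

text \<open>Points of the plane are vectors of type real^2; matrices are real^2^2.
  An element of PR^1 is a line through the origin, represented as a set.\<close>

definition proj_line :: "(real^2) set \<Rightarrow> bool" where
  "proj_line L \<longleftrightarrow> (\<exists>v::real^2. v \<noteq> 0 \<and> L = span {v})"

definition perp_proj :: "(real^2) set \<Rightarrow> real^2 \<Rightarrow> real^2" where
  "perp_proj \<theta> x = (let v = (SOME v. v \<noteq> 0 \<and> \<theta> = span {v})
                      in x - ((x \<bullet> v) / (v \<bullet> v)) *\<^sub>R v)"

definition unit_disc :: "(real^2) set" where
  "unit_disc = cball 0 1"

text \<open>T_w = T_{a_1} o ... o T_{a_n} for the word w = [a_1,...,a_n].\<close>
definition Tmap :: "(nat \<Rightarrow> real^2^2) \<Rightarrow> (nat \<Rightarrow> real^2) \<Rightarrow> nat \<Rightarrow> real^2 \<Rightarrow> real^2" where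
  "Tmap A d i x = A i *v x + d i"

definition Tword :: "(nat \<Rightarrow> real^2^2) \<Rightarrow> (nat \<Rightarrow> real^2) \<Rightarrow> nat list \<Rightarrow> real^2 \<Rightarrow> real^2" where
  "Tword A d w = foldr (\<lambda>a f. Tmap A d a \<circ> f) w id"

definition Dword :: "(nat \<Rightarrow> real^2^2) \<Rightarrow> (nat \<Rightarrow> real^2) \<Rightarrow> nat list \<Rightarrow> (real^2) set" where
  "Dword A d w = Tword A d w ` unit_disc"

text \<open>|w|_theta = - log_2 (|pi_theta(D_w)| / 2); the length of the projected segment is its diameter.\<close>
definition wlen :: "(nat \<Rightarrow> real^2^2) \<Rightarrow> (nat \<Rightarrow> real^2) \<Rightarrow> (real^2) set \<Rightarrow> nat list \<Rightarrow> real" where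
  "wlen A d \<theta> w = - log 2 (diameter (perp_proj \<theta> ` Dword A d w) / 2)"

definition phi :: "(nat \<Rightarrow> real^2^2) \<Rightarrow> nat \<Rightarrow> (real^2) set \<Rightarrow> (real^2) set" where
  "phi A i L = {x. A i *v x \<in> L}"

text \<open>For w = [a_1,...,a_n], phiword A w = phi_{a_n} o ... o phi_{a_1}.\<close>
definition phiword :: "(nat \<Rightarrow> real^2^2) \<Rightarrow> nat list \<Rightarrow> (real^2) set \<Rightarrow> (real^2) set" where
  "phiword A w \<theta> = fold (phi A) w \<theta>"

end

theory Submission
  imports Defs
begin

text \<open>For \<open>\<theta> = span {v}\<close> the projection \<open>\<pi>\<^sub>\<theta>\<close> is the orthogonal projection onto
  \<open>span {rot90 v}\<close>, so the projected width of \<open>D\<^sub>w = M\<^sub>w D + c\<close> is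
  \<open>2 \<parallel>rot90 v v* M\<^sub>w\<parallel> / \<parallel>rot90 v\<parallel>\<close>, where \<open>M\<^sub>w\<close> is the product of the matrices along \<open>w\<close>.
  For a \<open>2\<times>2\<close> matrix, \<open>rot90 (M *v u) v* M = det M *\<^sub>R rot90 u\<close>; hence this width ratio is a
  multiplicative cocycle: the factor contributed by \<open>M\<^sub>w A\<^sub>a\<close> is the one of \<open>M\<^sub>w\<close> at \<open>v\<close> times the
  one of \<open>A\<^sub>a\<close> at the preimage line \<open>M\<^sub>w\<^sup>-\<^sup>1 \<theta>\<close>. Taking logarithms gives the identity.\<close>

definition rot90 :: "real^2 \<Rightarrow> real^2" where
  "rot90 v = (\<chi> i. if i = 1 then - v$2 else v$1)"

lemma rot90_nth [simp]: "rot90 v $ 1 = - v$2" "rot90 v $ 2 = v$1"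
  by (simp_all add: rot90_def)

lemma inner_vec2: "(x::real^2) \<bullet> y = x$1 * y$1 + x$2 * y$2"
  by (simp add: inner_vec_def sum_2)

lemma norm_vec2: "norm (x::real^2) = sqrt ((x$1)\<^sup>2 + (x$2)\<^sup>2)"
  by (simp add: norm_eq_sqrt_inner inner_vec2 power2_eq_square)

lemma norm_rot90 [simp]: "norm (rot90 v) = norm v"
  by (simp add: norm_vec2 add.commute)

lemma rot90_eq_0_iff [simp]: "rot90 v = 0 \<longleftrightarrow> v = 0"
  by (metis norm_eq_zero norm_rot90)

lemma rot90_scaleR: "rot90 (t *\<^sub>R v) = t *\<^sub>R rot90 v"
  by (simp add: vec_eq_iff forall_2)

lemma rot90_matrix_vector_mult: "rot90 ((M::real^2^2) *v u) v* M = det M *\<^sub>R rot90 u"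
  by (simp add: vec_eq_iff forall_2 vector_matrix_mult_def matrix_vector_mult_def sum_2 det_2
      algebra_simps)

lemma proj_orthogonal_eq_proj_rot90:
  assumes "v \<noteq> 0"
  shows "x - ((x \<bullet> v) / (v \<bullet> v)) *\<^sub>R v = ((x \<bullet> rot90 v) / (rot90 v \<bullet> rot90 v)) *\<^sub>R rot90 v"
proof -
  have "(v$1)\<^sup>2 + (v$2)\<^sup>2 \<noteq> 0"
    using assms by (metis norm_vec2 norm_eq_zero real_sqrt_zero)
  then show ?thesis
    by (simp add: vec_eq_iff forall_2 inner_vec2 field_simps power2_eq_square)
qed

lemma vector_matrix_mult_eq_0_iff:
  fixes M :: "real^'n^'n"
  assumes "invertible M"
  shows "x v* M = 0 \<longleftrightarrow> x = 0"
  using inj_matrix_vector_mult[OF transpose_invertible[OF assms]]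
  by (metis transpose_matrix_vector matrix_vector_mult_0_right injD)

lemma diameter_functional_image_cball:
  fixes w :: "'a::real_inner" and q :: "'b::real_normed_vector"
  shows "diameter ((\<lambda>x. (x \<bullet> w + e) *\<^sub>R q) ` cball 0 1) = 2 * norm w * norm q"
proof (rule antisym)
  let ?f = "\<lambda>x. (x \<bullet> w + e) *\<^sub>R q"
  have "norm (?f x) \<le> (norm w + \<bar>e\<bar>) * norm q" if "norm x \<le> 1" for x
  proof -
    have "\<bar>x \<bullet> w + e\<bar> \<le> norm x * norm w + \<bar>e\<bar>"
      using Cauchy_Schwarz_ineq2[of x w] by linarith
    also have "\<dots> \<le> norm w + \<bar>e\<bar>"
      using that mult_left_le_one_le[of "norm w" "norm x"] by (simp add: mult.commute)
    finally show ?thesis by (simp add: mult_right_mono)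
  qed
  then have bounded: "bounded (?f ` cball 0 1)"
    by (auto simp: bounded_iff intro!: exI[where x = "(norm w + \<bar>e\<bar>) * norm q"])
  show "diameter (?f ` cball 0 1) \<le> 2 * norm w * norm q"
  proof (rule diameter_le)
    fix a b assume "a \<in> ?f ` cball 0 1" "b \<in> ?f ` cball 0 1"
    then obtain x y where x: "norm x \<le> 1" "a = ?f x" and y: "norm y \<le> 1" "b = ?f y"
      by auto
    have "norm (a - b) = \<bar>(x - y) \<bullet> w\<bar> * norm q"
      using x y by (simp add: algebra_simps flip: scaleR_diff_left)
    also have "\<dots> \<le> norm (x - y) * norm w * norm q"
      by (intro mult_right_mono Cauchy_Schwarz_ineq2) auto
    also have "\<dots> \<le> 2 * norm w * norm q"
      using x y norm_triangle_ineq4[of x y] by (intro mult_right_mono) auto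
    finally show "norm (a - b) \<le> 2 * norm w * norm q" .
  qed simp
  show "2 * norm w * norm q \<le> diameter (?f ` cball 0 1)"
  proof (cases "w = 0")
    case True
    then show ?thesis using diameter_ge_0[OF bounded] by simp
  next
    case False
    define x where "x = (1 / norm w) *\<^sub>R w"
    have "norm x = 1" "x \<bullet> w = norm w"
      using False by (simp_all add: x_def dot_square_norm power2_eq_square)
    then have "?f x \<in> ?f ` cball 0 1" "?f (-x) \<in> ?f ` cball 0 1"
      by (intro imageI; simp)+
    then have "norm (?f x - ?f (-x)) \<le> diameter (?f ` cball 0 1)"
      using diameter_bounded_bound[OF bounded] by (simp add: dist_norm)
    moreover have "?f x - ?f (-x) = (2 * norm w) *\<^sub>R q"
      using \<open>x \<bullet> w = norm w\<close> by (simp flip: scaleR_diff_left)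
    ultimately show ?thesis
      by simp
  qed
qed

text \<open>\<open>stretch M v\<close> is half the width of \<open>M D\<close> seen along the direction \<open>v\<close>; it is
  \<open>0\<close> for \<open>v = 0\<close> since \<open>x / 0 = 0\<close>.\<close>
definition stretch :: "real^2^2 \<Rightarrow> real^2 \<Rightarrow> real" where
  "stretch M v = norm (rot90 v v* M) / norm (rot90 v)"

lemma stretch_scaleR:
  assumes "t \<noteq> 0"
  shows "stretch M (t *\<^sub>R v) = stretch M v"
  using assms by (simp add: stretch_def rot90_scaleR scaleR_vector_matrix_assoc)

lemma stretch_pos:
  assumes "invertible M" "v \<noteq> 0"
  shows "stretch M v > 0"
  using assms by (simp add: stretch_def vector_matrix_mult_eq_0_iff)

lemma stretch_mult:
  fixes M N :: "real^2^2"
  assumes "M *v u = v"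
  shows "stretch (M ** N) v = stretch M v * stretch N u"
proof (cases "u = 0")
  case True
  then show ?thesis using assms by (simp add: stretch_def)
next
  case False
  have "rot90 v v* M = det M *\<^sub>R rot90 u"
    using rot90_matrix_vector_mult[of M u] by (simp add: assms)
  then have "rot90 v v* (M ** N) = det M *\<^sub>R (rot90 u v* N)"
    by (simp flip: vector_matrix_mul_assoc add: scaleR_vector_matrix_assoc)
  with \<open>rot90 v v* M = _\<close> False show ?thesis
    by (simp add: stretch_def)
qed

lemma diameter_proj_affine_image:
  fixes M :: "real^2^2"
  assumes "v \<noteq> 0"
  shows "diameter ((\<lambda>x. x - ((x \<bullet> v) / (v \<bullet> v)) *\<^sub>R v) ` (\<lambda>x. M *v x + c) ` cball 0 1)
    = 2 * stretch M v"
proof -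
  let ?u = "rot90 v"
  have "(\<lambda>x. x - ((x \<bullet> v) / (v \<bullet> v)) *\<^sub>R v) \<circ> (\<lambda>x. M *v x + c)
      = (\<lambda>x. (x \<bullet> (?u v* M) + c \<bullet> ?u) *\<^sub>R ((1 / (?u \<bullet> ?u)) *\<^sub>R ?u))"
  proof
    fix x
    have "(M *v x) \<bullet> ?u = x \<bullet> (?u v* M)"
      by (metis dot_lmul_matrix inner_commute)
    then show "((\<lambda>x. x - ((x \<bullet> v) / (v \<bullet> v)) *\<^sub>R v) \<circ> (\<lambda>x. M *v x + c)) x
        = (x \<bullet> (?u v* M) + c \<bullet> ?u) *\<^sub>R ((1 / (?u \<bullet> ?u)) *\<^sub>R ?u)"
      using proj_orthogonal_eq_proj_rot90[OF assms, of "M *v x + c"]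
      by (simp add: inner_add_left divide_inverse)
  qed
  then have "diameter ((\<lambda>x. x - ((x \<bullet> v) / (v \<bullet> v)) *\<^sub>R v) ` (\<lambda>x. M *v x + c) ` cball 0 1)
      = 2 * norm (?u v* M) * norm ((1 / (?u \<bullet> ?u)) *\<^sub>R ?u)"
    by (simp only: image_comp diameter_functional_image_cball)
  also have "norm ((1 / (?u \<bullet> ?u)) *\<^sub>R ?u) = 1 / norm ?u"
    using assms by (simp add: power2_norm_eq_inner[symmetric] power2_eq_square)
  finally show ?thesis by (simp add: stretch_def)
qed

definition word_matrix :: "(nat \<Rightarrow> real^2^2) \<Rightarrow> nat list \<Rightarrow> real^2^2" where
  "word_matrix A w = foldr (\<lambda>a M. A a ** M) w (mat 1)"

lemma word_matrix_Nil [simp]: "word_matrix A [] = mat 1"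
  by (simp add: word_matrix_def)

lemma word_matrix_Cons [simp]: "word_matrix A (a # w) = A a ** word_matrix A w"
  by (simp add: word_matrix_def)

lemma word_matrix_snoc: "word_matrix A (w @ [a]) = word_matrix A w ** A a"
  by (induction w) (simp_all add: word_matrix_def matrix_mul_assoc)

lemma invertible_word_matrix:
  assumes "\<And>i. i \<in> set w \<Longrightarrow> invertible (A i)"
  shows "invertible (word_matrix A w)"
  using assms by (induction w) (auto simp: word_matrix_def invertible_det_nz det_mul)

lemma Tword_eq_affine: "\<exists>c. Tword A d w = (\<lambda>x. word_matrix A w *v x + c)"
proof (induction w)
  case Nil
  show ?case by (auto simp: Tword_def word_matrix_def fun_eq_iff)
next
  case (Cons a w)
  then obtain c where "Tword A d w = (\<lambda>x. word_matrix A w *v x + c)" by blast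
  then have "Tword A d (a # w) = (\<lambda>x. word_matrix A (a # w) *v x + (A a *v c + d a))"
    by (simp add: Tword_def Tmap_def fun_eq_iff matrix_vector_right_distrib
        matrix_vector_mul_assoc)
  then show ?case by blast
qed

lemma wlen_span_eq:
  assumes "v \<noteq> 0"
  shows "wlen A d (span {v}) w = - log 2 (stretch (word_matrix A w) v)"
proof -
  define v0 where "v0 = (SOME v0. v0 \<noteq> 0 \<and> span {v} = span {v0})"
  have "\<exists>v0. v0 \<noteq> 0 \<and> span {v} = span {v0}"
    using assms by blast
  then have v0: "v0 \<noteq> 0 \<and> span {v} = span {v0}"
    unfolding v0_def by (rule someI_ex)
  then have "v0 \<in> span {v}"
    by (simp add: span_base)
  then obtain t where t: "v0 = t *\<^sub>R v"
    by (auto simp: span_singleton)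
  with v0 have "t \<noteq> 0"
    by auto
  obtain c where c: "Tword A d w = (\<lambda>x. word_matrix A w *v x + c)"
    using Tword_eq_affine by blast
  have "diameter (perp_proj (span {v}) ` Dword A d w) = 2 * stretch (word_matrix A w) v0"
    unfolding perp_proj_def v0_def[symmetric] Let_def Dword_def c unit_disc_def
    by (rule diameter_proj_affine_image) (use v0 in blast)
  then show ?thesis
    by (simp add: wlen_def t stretch_scaleR \<open>t \<noteq> 0\<close>)
qed

lemma phiword_eq_preimage: "phiword A w \<theta> = {x. word_matrix A w *v x \<in> \<theta>}"
  by (induction w arbitrary: \<theta>) (simp_all add: phiword_def phi_def word_matrix_def
      matrix_vector_mul_assoc)

lemma preimage_span_singleton:
  fixes M :: "real^'n^'n"
  assumes "invertible M" "M *v u = v"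
  shows "{x. M *v x \<in> span {v}} = span {u}"
proof -
  have "M *v x = t *\<^sub>R v \<longleftrightarrow> x = t *\<^sub>R u" for x t
    using inj_matrix_vector_mult[OF assms(1)]
    by (metis assms(2) injD matrix_vector_mult_scaleR)
  then show ?thesis
    by (auto simp: span_singleton)
qed

theorem lemma4p2:
  fixes k :: nat and A :: "nat \<Rightarrow> real^2^2" and d :: "nat \<Rightarrow> real^2"
  assumes pos: "\<And>i r s. i \<in> {1..k} \<Longrightarrow> A i $ r $ s > 0"
    and nrm: "\<And>i. i \<in> {1..k} \<Longrightarrow> onorm (\<lambda>x. A i *v x) < 1"
    and inv: "\<And>i. i \<in> {1..k} \<Longrightarrow> invertible (A i)"
    and inD: "\<And>i. i \<in> {1..k} \<Longrightarrow> Tmap A d i ` unit_disc \<subseteq> unit_disc"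
    and th: "proj_line \<theta>"
    and w: "set w \<subseteq> {1..k}"
    and a: "a \<in> {1..k}"
  shows "wlen A d \<theta> (w @ [a]) - wlen A d \<theta> w = wlen A d (phiword A w \<theta>) [a]"
proof -
  obtain v where v: "v \<noteq> 0" "\<theta> = span {v}"
    using th unfolding proj_line_def by blast
  define M where "M = word_matrix A w"
  have M: "invertible M"
    unfolding M_def using w inv by (intro invertible_word_matrix) auto
  then obtain B where "M ** B = mat 1"
    using invertible_right_inverse by blast
  define u where "u = B *v v"
  then have Mu: "M *v u = v"
    using \<open>M ** B = mat 1\<close> by (simp add: matrix_vector_mul_assoc)
  have u: "u \<noteq> 0"
    using Mu v(1) by auto
  have phi: "phiword A w \<theta> = span {u}"
    by (simp add: phiword_eq_preimage v(2) flip: M_def preimage_span_singleton[OF M Mu])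
  have "stretch (M ** A a) v = stretch M v * stretch (A a) u"
    by (rule stretch_mult[OF Mu])
  moreover have "stretch M v > 0" "stretch (A a) u > 0"
    using M inv[OF a] v(1) u by (simp_all add: stretch_pos)
  ultimately have "log 2 (stretch (M ** A a) v) = log 2 (stretch M v) + log 2 (stretch (A a) u)"
    by (simp add: log_mult)
  moreover have "wlen A d \<theta> (w @ [a]) = - log 2 (stretch (M ** A a) v)"
    by (simp add: v wlen_span_eq word_matrix_snoc M_def)
  moreover have "wlen A d \<theta> w = - log 2 (stretch M v)"
    by (simp add: v wlen_span_eq M_def)
  moreover have "wlen A d (phiword A w \<theta>) [a] = - log 2 (stretch (A a) u)"
    by (simp add: phi u wlen_span_eq)
  ultimately show ?thesis
    by simp
qed

end
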